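(* Let $\xi$ be a current with $|\xi|_{\mathcal{M}}<\infty$ and, for every $N\in\mathbb{N}$, let $\gamma^N=(\gamma^{i,N})_{1\le i\le N}$ be a symmetric (exchangeable) family of random $C^1([0,1],\mathbb{R}^d)$ curves, with empirical current $\xi^N=\frac1N\sum_{i=1}^N\gamma^{i,N}$. Suppose that for every $\theta\in C_b(\mathbb{R}^d,\mathbb{R}^d)$ there is $C$ such that $|\gamma^{i,N}(\theta)|\le C$ $\mathbb{P}$-a.s. uniformly in $i,N$, and that $\lim_{N\to\infty}\mathbb{E}[|\xi^N(\theta)-\xi(\theta)|]=0$. Then for every fixed $r\in\mathbb{N}$ and every $(\theta_1,\dots,\theta_r)\in C_b(\mathbb{R}^d,\mathbb{R}^d)^r$, $$\lim_{N\to\infty}\mathbb{E}\big[(\gamma^{1,N}\otimes\cdots\otimes\gamma^{r,N})(\theta_1,\dots,\theta_r)\big]=\prod_{i=1}^r\xi(\theta_i).$$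
   Context: A current is a continuous linear functional on $C_b(\mathbb{R}^d,\mathbb{R}^d)$ (bounded continuous vector fields with sup norm), with $|\xi|_{\mathcal{M}}=\sup_{\|\theta\|_\infty\le1}|\xi(\theta)|$. A $C^1$ curve $\gamma:[0,1]\to\mathbb{R}^d$ is identified with the current $\gamma(\theta)=\int_0^1\langle\theta(\gamma(\sigma)),\partial_\sigma\gamma(\sigma)\rangle d\sigma$. Tensor product: $(\gamma_1\otimes\cdots\otimes\gamma_r)(\theta_1,\dots,\theta_r)=\prod_i\gamma_i(\theta_i)$. A random curve is a measurable map from a probability space $(\Omega,\mathcal{F},\mathbb{P})$ to $C([0,1];\mathbb{R}^d)$ with its Borel $\sigma$-algebra; a family of random curves is symmetric (exchangeable) if its joint law is invariant under permutations of the indices. *)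

theory Defs
  imports "HOL-Probability.Probability"
begin

text \<open>Vector fields in C_b(R^d,R^d) are elements of the library type of bounded continuous
functions bcontfun, with 'a a Euclidean space (R^d); its norm is the sup norm.\<close>

definition curve_current :: "(real \<Rightarrow> 'a::euclidean_space) \<Rightarrow> ('a \<Rightarrow>\<^sub>C 'a) \<Rightarrow> real" where
  "curve_current \<gamma> \<theta> =
     integral {0..1} (\<lambda>\<sigma>. inner (apply_bcontfun \<theta> (\<gamma> \<sigma>)) (vector_derivative \<gamma> (at \<sigma> within {0..1})))"

definition curve_tensor :: "nat \<Rightarrow> (nat \<Rightarrow> real \<Rightarrow> 'a::euclidean_space) \<Rightarrow> (nat \<Rightarrow> ('a \<Rightarrow>\<^sub>C 'a)) \<Rightarrow> real" where
  "curve_tensor r \<gamma> \<theta> = (\<Prod>i\<in>{1..r}. curve_current (\<gamma> i) (\<theta> i))"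

text \<open>Isometric embedding of C([0,1];R^d) (sup norm) into the bounded continuous functions
on R, by constant extension outside [0,1]. The Borel sigma-algebra of C([0,1];R^d) is the
trace of the Borel sigma-algebra of the target on the image.\<close>
definition curve_as_C :: "(real \<Rightarrow> 'a::euclidean_space) \<Rightarrow> (real \<Rightarrow>\<^sub>C 'a)" where
  "curve_as_C \<gamma> = Bcontfun (\<lambda>t. \<gamma> (max 0 (min 1 t)))"

definition symmetric_family :: "'w measure \<Rightarrow> nat \<Rightarrow> (nat \<Rightarrow> 'w \<Rightarrow> real \<Rightarrow> 'a::euclidean_space) \<Rightarrow> bool" where
  "symmetric_family M N \<gamma> \<longleftrightarrow>
     (\<forall>p. p permutes {1..N} \<longrightarrow>
        distr M (PiM {1..N} (\<lambda>_. borel)) (\<lambda>\<omega>. \<lambda>i\<in>{1..N}. curve_as_C (\<gamma> (p i) \<omega>))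
      = distr M (PiM {1..N} (\<lambda>_. borel)) (\<lambda>\<omega>. \<lambda>i\<in>{1..N}. curve_as_C (\<gamma> i \<omega>)))"

end

theory Submission
  imports Defs
begin

text \<open>
  By exchangeability, the expectation of gamma^{j_1}(theta_1) \<cdots> gamma^{j_r}(theta_r) is the same
  for every injective index map j. The expectation of xi^N(theta_1) \<cdots> xi^N(theta_r) is the average
  of these expectations over all maps {1..r} \<rightarrow> {1..N}, so it differs from the expectation of
  (gamma^1 \<otimes> \<cdots> \<otimes> gamma^r)(theta) only through the non-injective maps; they form a fraction
  1 - N(N-1)\<cdots>(N-r+1)/N^r \<longrightarrow> 0 of all maps and contribute bounded terms. Since all factors are
  uniformly bounded, the L^1 convergence of each xi^N(theta_k) makes the expectation of
  xi^N(theta_1) \<cdots> xi^N(theta_r) converge to xi(theta_1) \<cdots> xi(theta_r).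

  Exchangeability is a statement about laws on the curve space, so the current of a C^1 curve has
  to be a Borel function of the curve: it is the limit of left Riemann sums of forward difference
  quotients.
\<close>

lemma abs_prod_diff_le:
  fixes a b :: "'i \<Rightarrow> real"
  assumes a: "\<And>k. k \<in> S \<Longrightarrow> \<bar>a k\<bar> \<le> L" and b: "\<And>k. k \<in> S \<Longrightarrow> \<bar>b k\<bar> \<le> L" and "0 < L"
  shows "\<bar>(\<Prod>k\<in>S. a k) - (\<Prod>k\<in>S. b k)\<bar> \<le> L ^ card S / L * (\<Sum>k\<in>S. \<bar>a k - b k\<bar>)"
proof (cases "finite S")
  case True
  have scale: "(\<Prod>k\<in>S. f k) = L ^ card S * (\<Prod>k\<in>S. f k / L)" for f :: "'i \<Rightarrow> real"
    using True \<open>0 < L\<close> by (simp add: prod_dividef)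
  have "\<bar>(\<Prod>k\<in>S. a k / L) - (\<Prod>k\<in>S. b k / L)\<bar> \<le> (\<Sum>k\<in>S. \<bar>a k / L - b k / L\<bar>)"
    using norm_prod_diff[of S "\<lambda>k. a k / L" "\<lambda>k. b k / L"] a b \<open>0 < L\<close> by simp
  also have "\<dots> = (\<Sum>k\<in>S. \<bar>a k - b k\<bar>) / L"
    using \<open>0 < L\<close> by (simp add: sum_divide_distrib flip: diff_divide_distrib)
  finally have "L ^ card S * \<bar>(\<Prod>k\<in>S. a k / L) - (\<Prod>k\<in>S. b k / L)\<bar>
      \<le> L ^ card S * ((\<Sum>k\<in>S. \<bar>a k - b k\<bar>) / L)"
    using \<open>0 < L\<close> by (intro mult_left_mono) auto
  moreover have "(\<Prod>k\<in>S. a k) - (\<Prod>k\<in>S. b k) = L ^ card S * ((\<Prod>k\<in>S. a k / L) - (\<Prod>k\<in>S. b k / L))"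
    using scale[of a] scale[of b] by (simp add: right_diff_distrib)
  ultimately show ?thesis
    using \<open>0 < L\<close> by (simp add: abs_mult)
qed simp

lemma (in prob_space) integrable_prod_bounded:
  fixes f :: "'i \<Rightarrow> 'a \<Rightarrow> real"
  assumes meas: "\<And>k. k \<in> K \<Longrightarrow> f k \<in> borel_measurable M"
    and bdd: "AE x in M. \<forall>k\<in>K. \<bar>f k x\<bar> \<le> L" and "1 \<le> L"
  shows "integrable M (\<lambda>x. \<Prod>k\<in>K. f k x)" and "\<bar>\<integral>x. (\<Prod>k\<in>K. f k x) \<partial>M\<bar> \<le> L ^ card K"
proof -
  have ae: "AE x in M. \<bar>\<Prod>k\<in>K. f k x\<bar> \<le> L ^ card K"
    using bdd by eventually_elim (use \<open>1 \<le> L\<close> in \<open>auto simp: abs_prod intro!: prod_le_power\<close>)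
  then show int: "integrable M (\<lambda>x. \<Prod>k\<in>K. f k x)"
    using meas by (intro integrable_const_bound[where B = "L ^ card K"]) auto
  show "\<bar>\<integral>x. (\<Prod>k\<in>K. f k x) \<partial>M\<bar> \<le> L ^ card K"
    using int ae by (intro order_trans[OF integral_abs_bound integral_le_const]) auto
qed

lemma (in prob_space) tendsto_integral_prod:
  fixes Y :: "nat \<Rightarrow> 'i \<Rightarrow> 'a \<Rightarrow> real"
  assumes "finite K"
    and meas: "\<And>N k. k \<in> K \<Longrightarrow> Y N k \<in> borel_measurable M"
    and bdd: "\<And>N k. k \<in> K \<Longrightarrow> AE x in M. \<bar>Y N k x\<bar> \<le> L"
    and c: "\<And>k. k \<in> K \<Longrightarrow> \<bar>c k\<bar> \<le> L"
    and lim: "\<And>k. k \<in> K \<Longrightarrow> (\<lambda>N. \<integral>x. \<bar>Y N k x - c k\<bar> \<partial>M) \<longlonglongrightarrow> 0"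
  shows "(\<lambda>N. \<integral>x. (\<Prod>k\<in>K. Y N k x) \<partial>M) \<longlonglongrightarrow> (\<Prod>k\<in>K. c k)"
proof -
  define L' where "L' = max 1 L"
  have "1 \<le> L'" "0 < L'" unfolding L'_def by simp_all
  have c': "\<bar>c k\<bar> \<le> L'" if "k \<in> K" for k
    using c[OF that] by (simp add: L'_def)
  define B where "B = L' ^ card K / L'"
  have bdd': "AE x in M. \<forall>k\<in>K. \<bar>Y N k x\<bar> \<le> L'" for N
    using \<open>finite K\<close> by (intro AE_finite_allI) (auto simp: L'_def elim!: eventually_mono[OF bdd[of _ N]])
  have int_dev: "integrable M (\<lambda>x. \<bar>Y N k x - c k\<bar>)" if "k \<in> K" for N k
    using bdd[OF that] meas[OF that]
    by (intro integrable_abs Bochner_Integration.integrable_diff integrable_const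
        integrable_const_bound) auto
  have int_prod: "integrable M (\<lambda>x. \<Prod>k\<in>K. Y N k x)" for N
    using meas bdd' \<open>1 \<le> L'\<close> by (rule integrable_prod_bounded)
  have pointwise: "\<bar>(\<Prod>k\<in>K. Y N k x) - (\<Prod>k\<in>K. c k)\<bar> \<le> B * (\<Sum>k\<in>K. \<bar>Y N k x - c k\<bar>)"
    if "\<forall>k\<in>K. \<bar>Y N k x\<bar> \<le> L'" for N x
    unfolding B_def using that c' \<open>0 < L'\<close> by (intro abs_prod_diff_le) auto
  have bound: "\<bar>(\<integral>x. (\<Prod>k\<in>K. Y N k x) \<partial>M) - (\<Prod>k\<in>K. c k)\<bar> \<le> B * (\<Sum>k\<in>K. \<integral>x. \<bar>Y N k x - c k\<bar> \<partial>M)" for N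
  proof -
    have "\<bar>(\<integral>x. (\<Prod>k\<in>K. Y N k x) \<partial>M) - (\<Prod>k\<in>K. c k)\<bar> = \<bar>\<integral>x. (\<Prod>k\<in>K. Y N k x) - (\<Prod>k\<in>K. c k) \<partial>M\<bar>"
      using int_prod by (simp add: prob_space)
    also have "\<dots> \<le> \<integral>x. \<bar>(\<Prod>k\<in>K. Y N k x) - (\<Prod>k\<in>K. c k)\<bar> \<partial>M"
      by (rule integral_abs_bound)
    also have "\<dots> \<le> \<integral>x. B * (\<Sum>k\<in>K. \<bar>Y N k x - c k\<bar>) \<partial>M"
      using int_dev int_prod eventually_mono[OF bdd' pointwise]
      by (intro integral_mono_AE integrable_abs Bochner_Integration.integrable_diff
          integrable_const) auto
    also have "\<dots> = B * (\<Sum>k\<in>K. \<integral>x. \<bar>Y N k x - c k\<bar> \<partial>M)"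
      using int_dev by (simp add: Bochner_Integration.integral_sum)
    finally show ?thesis .
  qed
  have "(\<lambda>N. B * (\<Sum>k\<in>K. \<integral>x. \<bar>Y N k x - c k\<bar> \<partial>M)) \<longlonglongrightarrow> 0"
    by (rule tendsto_mult_right_zero, rule tendsto_null_sum) (rule lim)
  then have "(\<lambda>N. (\<integral>x. (\<Prod>k\<in>K. Y N k x) \<partial>M) - (\<Prod>k\<in>K. c k)) \<longlonglongrightarrow> 0"
    by (rule Lim_null_comparison[OF always_eventually[OF allI], rotated])
      (simp only: real_norm_def bound)
  then show ?thesis
    by (simp add: LIM_zero_iff)
qed

lemma (in prob_space) tendsto_integral_prod_averages:
  fixes X :: "nat \<Rightarrow> nat \<Rightarrow> 'i \<Rightarrow> 'a \<Rightarrow> real"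
  assumes "finite K"
    and meas: "\<And>N i k. i \<in> {1..N} \<Longrightarrow> k \<in> K \<Longrightarrow> X N i k \<in> borel_measurable M"
    and bdd: "\<And>N. AE x in M. \<forall>k\<in>K. \<forall>i\<in>{1..N}. \<bar>X N i k x\<bar> \<le> L"
    and c: "\<And>k. k \<in> K \<Longrightarrow> \<bar>c k\<bar> \<le> L" and "0 \<le> L"
    and lln: "\<And>k. k \<in> K \<Longrightarrow> (\<lambda>N. \<integral>x. \<bar>(\<Sum>i\<in>{1..N}. X N i k x) / real N - c k\<bar> \<partial>M) \<longlonglongrightarrow> 0"
  shows "(\<lambda>N. \<integral>x. (\<Prod>k\<in>K. (\<Sum>i\<in>{1..N}. X N i k x) / real N) \<partial>M) \<longlonglongrightarrow> (\<Prod>k\<in>K. c k)"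
proof (rule tendsto_integral_prod[OF \<open>finite K\<close> _ _ c lln])
  show "(\<lambda>x. (\<Sum>i\<in>{1..N}. X N i k x) / real N) \<in> borel_measurable M" if "k \<in> K" for N k
    using meas that by (intro borel_measurable_divide borel_measurable_sum) auto
  show "AE x in M. \<bar>(\<Sum>i\<in>{1..N}. X N i k x) / real N\<bar> \<le> L" if "k \<in> K" for N k
    using bdd[of N]
  proof eventually_elim
    case (elim x)
    have "\<bar>\<Sum>i\<in>{1..N}. X N i k x\<bar> \<le> real N * L"
      using elim that sum_bounded_above[of "{1..N}" "\<lambda>i. \<bar>X N i k x\<bar>" L]
      by (intro order_trans[OF sum_abs]) auto
    then show ?case
      using \<open>0 \<le> L\<close> by (cases "N = 0") (auto simp: field_simps)
  qed
qed

lemma tendsto_card_inj_maps_ratio: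
  assumes "finite A"
  shows "(\<lambda>N. real (card {j \<in> A \<rightarrow>\<^sub>E {1..N}. inj_on j A}) / real N ^ card A) \<longlonglongrightarrow> 1"
proof -
  have "(\<lambda>N. \<Prod>i\<in>{0..<card A}. 1 - real i * (1 / real N)) \<longlonglongrightarrow> (\<Prod>i\<in>{0..<card A}. 1 - real i * 0)"
    by (intro tendsto_prod tendsto_diff tendsto_mult tendsto_const lim_1_over_n)
  then have "(\<lambda>N. \<Prod>i\<in>{0..<card A}. 1 - real i * (1 / real N)) \<longlonglongrightarrow> 1"
    by simp
  moreover have "(\<Prod>i\<in>{0..<card A}. 1 - real i * (1 / real N))
      = real (card {j \<in> A \<rightarrow>\<^sub>E {1..N}. inj_on j A}) / real N ^ card A" if "card A \<le> N" for N
  proof -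
    have "card {j \<in> A \<rightarrow>\<^sub>E {1..N}. inj_on j A} = (\<Prod>i\<in>{0..<card A}. N - i)"
      using card_inj_on_subset_funcset[of A "{1..N}" A] assms by simp
    then have "real (card {j \<in> A \<rightarrow>\<^sub>E {1..N}. inj_on j A}) / real N ^ card A
        = (\<Prod>i\<in>{0..<card A}. real (N - i) / real N)"
      by (simp add: prod_dividef)
    also have "\<dots> = (\<Prod>i\<in>{0..<card A}. 1 - real i * (1 / real N))"
      using that by (intro prod.cong) (auto simp: field_simps)
    finally show ?thesis ..
  qed
  ultimately show ?thesis
    by (elim Lim_transform_eventually) (auto intro: eventually_mono[OF eventually_ge_at_top])
qed

lemma tendsto_average_over_maps:
  fixes f :: "nat \<Rightarrow> ('i \<Rightarrow> nat) \<Rightarrow> real"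
  assumes "finite A"
    and bound: "\<And>N j. j \<in> A \<rightarrow>\<^sub>E {1..N} \<Longrightarrow> \<bar>f N j\<bar> \<le> B"
    and inj: "\<And>N j. j \<in> A \<rightarrow>\<^sub>E {1..N} \<Longrightarrow> inj_on j A \<Longrightarrow> f N j = g N"
    and bound_g: "\<And>N. card A \<le> N \<Longrightarrow> \<bar>g N\<bar> \<le> B"
  shows "(\<lambda>N. (\<Sum>j\<in>A \<rightarrow>\<^sub>E {1..N}. f N j) / real N ^ card A - g N) \<longlonglongrightarrow> 0"
proof -
  define I where "I N = {j \<in> A \<rightarrow>\<^sub>E {1..N::nat}. inj_on j A}" for N
  have sub: "I N \<subseteq> A \<rightarrow>\<^sub>E {1..N}" for N
    unfolding I_def by blast
  have fin: "finite (A \<rightarrow>\<^sub>E {1..N::nat})" for N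
    using \<open>finite A\<close> by (intro finite_PiE) auto
  have card: "card (A \<rightarrow>\<^sub>E {1..N::nat}) = N ^ card A" for N
    using \<open>finite A\<close> by (simp add: card_PiE)
  have bound_diff: "\<bar>(\<Sum>j\<in>A \<rightarrow>\<^sub>E {1..N}. f N j) / real N ^ card A - g N\<bar>
      \<le> 2 * B * (1 - real (card (I N)) / real N ^ card A)" if "max 1 (card A) \<le> N" for N
  proof -
    have pos: "0 < real N ^ card A" using that by simp
    have "(\<Sum>j\<in>A \<rightarrow>\<^sub>E {1..N}. f N j) / real N ^ card A - g N
        = (\<Sum>j\<in>A \<rightarrow>\<^sub>E {1..N}. f N j - g N) / real N ^ card A"
      unfolding sum_subtractf sum_constant card using pos by (simp add: field_simps)
    also have "(\<Sum>j\<in>A \<rightarrow>\<^sub>E {1..N}. f N j - g N) = (\<Sum>j\<in>(A \<rightarrow>\<^sub>E {1..N}) - I N. f N j - g N)"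
      using fin inj by (intro sum.mono_neutral_right) (auto simp: I_def)
    finally have eq: "(\<Sum>j\<in>A \<rightarrow>\<^sub>E {1..N}. f N j) / real N ^ card A - g N
        = (\<Sum>j\<in>(A \<rightarrow>\<^sub>E {1..N}) - I N. f N j - g N) / real N ^ card A" .
    have "\<bar>f N j - g N\<bar> \<le> 2 * B" if "j \<in> A \<rightarrow>\<^sub>E {1..N}" for j
      using bound[OF that] bound_g[of N] \<open>max 1 (card A) \<le> N\<close> by arith
    then have "\<bar>\<Sum>j\<in>(A \<rightarrow>\<^sub>E {1..N}) - I N. f N j - g N\<bar> \<le> real (card ((A \<rightarrow>\<^sub>E {1..N}) - I N)) * (2 * B)"
      by (intro order_trans[OF sum_abs sum_bounded_above]) blast
    also have "real (card ((A \<rightarrow>\<^sub>E {1..N}) - I N)) = real N ^ card A - real (card (I N))"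
      unfolding card_Diff_subset[OF finite_subset[OF sub fin] sub] card[symmetric]
        of_nat_power[symmetric]
      using card_mono[OF fin sub] by (rule of_nat_diff)
    finally show ?thesis
      unfolding eq using pos by (simp add: field_simps)
  qed
  have "(\<lambda>N. 2 * B * (1 - real (card (I N)) / real N ^ card A)) \<longlonglongrightarrow> 2 * B * (1 - 1)"
    unfolding I_def
    by (intro tendsto_mult tendsto_diff tendsto_const tendsto_card_inj_maps_ratio \<open>finite A\<close>)
  then have "(\<lambda>N. 2 * B * (1 - real (card (I N)) / real N ^ card A)) \<longlonglongrightarrow> 0"
    by simp
  then show ?thesis
    by (rule Lim_null_comparison[OF eventually_mono[OF eventually_ge_at_top[of "max 1 (card A)"]],
          rotated])
      (simp only: real_norm_def bound_diff)
qed

lemma integral_prod_averages: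
  fixes X :: "'i \<Rightarrow> 'k \<Rightarrow> 'a \<Rightarrow> real"
  assumes "finite K" "finite I"
    and int: "\<And>j. j \<in> K \<rightarrow>\<^sub>E I \<Longrightarrow> integrable M (\<lambda>x. \<Prod>k\<in>K. X (j k) k x)"
  shows "(\<integral>x. (\<Prod>k\<in>K. (\<Sum>i\<in>I. X i k x) / n) \<partial>M)
    = (\<Sum>j\<in>K \<rightarrow>\<^sub>E I. \<integral>x. (\<Prod>k\<in>K. X (j k) k x) \<partial>M) / n ^ card K"
proof -
  have "(\<Prod>k\<in>K. (\<Sum>i\<in>I. X i k x) / n) = (\<Sum>j\<in>K \<rightarrow>\<^sub>E I. \<Prod>k\<in>K. X (j k) k x) / n ^ card K" for x
    using assms(1,2) by (simp only: prod_dividef prod_sum_PiE prod_constant)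
  then show ?thesis
    using int by (simp add: Bochner_Integration.integral_sum)
qed

lemma (in prob_space) tendsto_integral_prod_exchangeable:
  fixes X :: "nat \<Rightarrow> nat \<Rightarrow> nat \<Rightarrow> 'a \<Rightarrow> real"
  assumes meas: "\<And>N i k. i \<in> {1..N} \<Longrightarrow> k \<in> {1..r} \<Longrightarrow> X N i k \<in> borel_measurable M"
    and bdd: "\<And>N i k. i \<in> {1..N} \<Longrightarrow> k \<in> {1..r} \<Longrightarrow> AE x in M. \<bar>X N i k x\<bar> \<le> C k"
    and exch: "\<And>N j. r \<le> N \<Longrightarrow> j \<in> {1..r} \<rightarrow>\<^sub>E {1..N} \<Longrightarrow> inj_on j {1..r} \<Longrightarrow>
      (\<integral>x. (\<Prod>k\<in>{1..r}. X N (j k) k x) \<partial>M) = (\<integral>x. (\<Prod>k\<in>{1..r}. X N k k x) \<partial>M)"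
    and lln: "\<And>k. k \<in> {1..r} \<Longrightarrow>
      (\<lambda>N. \<integral>x. \<bar>(\<Sum>i\<in>{1..N}. X N i k x) / real N - c k\<bar> \<partial>M) \<longlonglongrightarrow> 0"
  shows "(\<lambda>N. \<integral>x. (\<Prod>k\<in>{1..r}. X N k k x) \<partial>M) \<longlonglongrightarrow> (\<Prod>k\<in>{1..r}. c k)"
proof -
  define L where "L = 1 + (\<Sum>k\<in>{1..r}. \<bar>C k\<bar> + \<bar>c k\<bar>)"
  have "1 \<le> L"
    unfolding L_def by (simp add: sum_nonneg)
  have CL: "C k \<le> L" and cL: "\<bar>c k\<bar> \<le> L" if "k \<in> {1..r}" for k
    using member_le_sum[OF that, of "\<lambda>k. \<bar>C k\<bar> + \<bar>c k\<bar>"] unfolding L_def by auto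
  have bddL: "AE x in M. \<forall>k\<in>{1..r}. \<forall>i\<in>{1..N}. \<bar>X N i k x\<bar> \<le> L" for N
  proof (intro AE_finite_allI finite_atLeastAtMost)
    fix k i assume k: "k \<in> {1..r}" and i: "i \<in> {1..N}"
    show "AE x in M. \<bar>X N i k x\<bar> \<le> L"
      using bdd[OF i k] by eventually_elim (use CL[OF k] in auto)
  qed
  define E where "E N j = (\<integral>x. (\<Prod>k\<in>{1..r}. X N (j k) k x) \<partial>M)" for N j
  have int: "integrable M (\<lambda>x. \<Prod>k\<in>{1..r}. X N (j k) k x)" and E_bound: "\<bar>E N j\<bar> \<le> L ^ r"
    if "j \<in> {1..r} \<rightarrow> {1..N}" for N j
  proof -
    have "X N (j k) k \<in> borel_measurable M" if "k \<in> {1..r}" for k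
      using meas \<open>j \<in> {1..r} \<rightarrow> {1..N}\<close> that by blast
    moreover have "AE x in M. \<forall>k\<in>{1..r}. \<bar>X N (j k) k x\<bar> \<le> L"
      using bddL[of N] by eventually_elim (use that in blast)
    ultimately show "integrable M (\<lambda>x. \<Prod>k\<in>{1..r}. X N (j k) k x)" "\<bar>E N j\<bar> \<le> L ^ r"
      unfolding E_def using integrable_prod_bounded[of "{1..r}" "\<lambda>k. X N (j k) k" L] \<open>1 \<le> L\<close> by auto
  qed
  have lim_avg: "(\<lambda>N. \<integral>x. (\<Prod>k\<in>{1..r}. (\<Sum>i\<in>{1..N}. X N i k x) / real N) \<partial>M) \<longlonglongrightarrow> (\<Prod>k\<in>{1..r}. c k)"
    using meas bddL cL \<open>1 \<le> L\<close> lln by (intro tendsto_integral_prod_averages) auto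
  have expand: "(\<integral>x. (\<Prod>k\<in>{1..r}. (\<Sum>i\<in>{1..N}. X N i k x) / real N) \<partial>M)
      = (\<Sum>j\<in>{1..r} \<rightarrow>\<^sub>E {1..N}. E N j) / real N ^ r" for N
    unfolding E_def using int by (subst integral_prod_averages) (auto simp: PiE_iff)
  have "(\<lambda>N. (\<Sum>j\<in>{1..r} \<rightarrow>\<^sub>E {1..N}. E N j) / real N ^ card {1..r} - E N (\<lambda>k. k)) \<longlonglongrightarrow> 0"
  proof (rule tendsto_average_over_maps[where B = "L ^ r"])
    show "E N j = E N (\<lambda>k. k)" if "j \<in> {1..r} \<rightarrow>\<^sub>E {1..N}" "inj_on j {1..r}" for N j
      using exch that card_inj_on_le[of j "{1..r}" "{1..N}"] unfolding E_def by auto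
    show "\<bar>E N j\<bar> \<le> L ^ r" if "j \<in> {1..r} \<rightarrow>\<^sub>E {1..N}" for N j
      using that by (intro E_bound) auto
    show "\<bar>E N (\<lambda>k. k)\<bar> \<le> L ^ r" if "card {1..r} \<le> N" for N
      using that by (intro E_bound) auto
  qed simp
  from tendsto_diff[OF lim_avg[unfolded expand] this[simplified]] show ?thesis
    by (simp add: E_def)
qed

lemma inj_on_extends_to_permutation:
  assumes "A \<subseteq> B" "finite B" "inj_on j A" "j ` A \<subseteq> B"
  obtains p where "p permutes B" "\<And>k. k \<in> A \<Longrightarrow> p k = j k"
proof -
  have "finite A"
    using assms(1,2) by (rule finite_subset)
  have "card (B - A) = card (B - j ` A)"
    using card_Diff_subset[OF \<open>finite A\<close> assms(1)] card_image[OF assms(3)]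
      card_Diff_subset[OF finite_imageI[OF \<open>finite A\<close>] assms(4)] by simp
  then obtain g where g: "bij_betw g (B - A) (B - j ` A)"
    using finite_same_card_bij[OF finite_Diff[OF assms(2)] finite_Diff[OF assms(2)]] by blast
  define p where "p k = (if k \<in> A then j k else if k \<in> B then g k else k)" for k
  have "bij_betw p A (j ` A)"
    using inj_on_imp_bij_betw[OF assms(3)] by (rule bij_betw_cong[THEN iffD1, rotated]) (simp add: p_def)
  moreover have "bij_betw p (B - A) (B - j ` A)"
    using g by (rule bij_betw_cong[THEN iffD1, rotated]) (simp add: p_def)
  ultimately have "bij_betw p (A \<union> (B - A)) (j ` A \<union> (B - j ` A))"
    by (rule bij_betw_combine) blast
  moreover have "A \<union> (B - A) = B" "j ` A \<union> (B - j ` A) = B"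
    using assms(1,4) by auto
  ultimately have "bij_betw p B B"
    by simp
  then have "p permutes B"
    by (rule bij_imp_permutes) (use assms(1) in \<open>auto simp: p_def\<close>)
  then show ?thesis
    by (rule that) (simp add: p_def)
qed

lemma integral_left_endpoint_error:
  fixes f :: "real \<Rightarrow> real"
  assumes "a \<le> b" and f: "continuous_on {a..b} f" and close: "\<And>t. t \<in> {a..b} \<Longrightarrow> \<bar>f t - f a\<bar> \<le> e"
  shows "\<bar>integral {a..b} f - (b - a) * f a\<bar> \<le> e * (b - a)"
proof -
  have "integral {a..b} (\<lambda>t. f t - f a) = integral {a..b} f - (b - a) * f a"
    using \<open>a \<le> b\<close> f by (simp add: integral_diff integrable_continuous_interval)
  moreover have "norm (integral {a..b} (\<lambda>t. f t - f a)) \<le> e * (b - a)"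
    using \<open>a \<le> b\<close> f close by (intro integral_bound continuous_intros) auto
  ultimately show ?thesis
    by simp
qed

lemma left_riemann_sum_error:
  fixes f :: "real \<Rightarrow> real" and m n :: nat and e :: real
  assumes f: "continuous_on {0..1} f" and "0 < n" and "m \<le> n"
    and close: "\<And>s t. s \<in> {0..1} \<Longrightarrow> t \<in> {0..1} \<Longrightarrow> \<bar>t - s\<bar> \<le> 1 / real n \<Longrightarrow> \<bar>f t - f s\<bar> \<le> e"
  shows "\<bar>integral {0..real m / real n} f - (\<Sum>k<m. f (real k / real n)) / real n\<bar> \<le> real m * e / real n"
  using \<open>m \<le> n\<close>
proof (induction m)
  case (Suc m)
  let ?a = "real m / n" and ?b = "real (Suc m) / n"
  have ab: "0 \<le> ?a" "?a \<le> ?b" "?b \<le> 1" "?b - ?a = 1 / n"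
    using Suc.prems \<open>0 < n\<close> by (auto simp: field_simps)
  have "integral {0..?a} f + integral {?a..?b} f = integral {0..?b} f"
    using ab by (intro Henstock_Kurzweil_Integration.integral_combine
        integrable_continuous_interval continuous_on_subset[OF f]) (auto intro: order_trans[OF ab(1)])
  moreover have "\<bar>integral {?a..?b} f - (?b - ?a) * f ?a\<bar> \<le> e * (?b - ?a)"
    using ab by (intro integral_left_endpoint_error continuous_on_subset[OF f] close)
      (auto intro: order_trans[OF ab(1)])
  ultimately have "\<bar>integral {0..?b} f - (\<Sum>k<Suc m. f (k / n)) / n\<bar>
      \<le> \<bar>integral {0..?a} f - (\<Sum>k<m. f (k / n)) / n\<bar> + e / n"
    using ab(4) by (simp add: add_divide_distrib)
  also have "\<dots> \<le> Suc m * e / n"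
    using Suc by (simp add: add_divide_distrib distrib_right)
  finally show ?case .
qed simp

lemma tendsto_left_riemann_sum:
  fixes f :: "real \<Rightarrow> real"
  assumes f: "continuous_on {0..1} f"
  shows "(\<lambda>n. (\<Sum>k<n. f (real k / real n)) / real n) \<longlonglongrightarrow> integral {0..1} f"
proof (rule LIMSEQ_I)
  fix e :: real assume "0 < e"
  obtain d where "0 < d" and d: "\<And>s t. s \<in> {0..1} \<Longrightarrow> t \<in> {0..1} \<Longrightarrow> dist t s < d \<Longrightarrow> dist (f t) (f s) < e / 2"
    using compact_uniformly_continuous[OF f compact_Icc] \<open>0 < e\<close>
    unfolding uniformly_continuous_on_def by (metis half_gt_zero)
  obtain n0 :: nat where "1 / d < n0"
    using reals_Archimedean2 by blast
  have "\<bar>(\<Sum>k<n. f (k / n)) / n - integral {0..1} f\<bar> < e" if "n0 \<le> n" for n :: nat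
  proof -
    have "1 / d < n"
      using \<open>1 / d < n0\<close> that by (meson less_le_trans of_nat_le_iff)
    moreover have "0 < 1 / d"
      using \<open>0 < d\<close> by simp
    ultimately have "1 < d * n"
      using \<open>0 < d\<close> by (simp add: field_simps)
    then have "0 < n"
      by (cases n) auto
    with \<open>1 < d * n\<close> have "1 / n < d"
      by (simp add: field_simps)
    have "\<bar>f t - f s\<bar> \<le> e / 2" if "s \<in> {0..1}" "t \<in> {0..1}" "\<bar>t - s\<bar> \<le> 1 / n" for s t
      using d[OF that(1,2)] that(3) \<open>1 / n < d\<close> by (simp add: dist_real_def)
    then have "\<bar>integral {0..n / n} f - (\<Sum>k<n. f (k / n)) / n\<bar> \<le> n * (e / 2) / n"
      using \<open>0 < n\<close> by (intro left_riemann_sum_error f) auto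
    then show ?thesis
      using \<open>0 < n\<close> \<open>0 < e\<close> by (simp add: abs_minus_commute)
  qed
  then show "\<exists>n0. \<forall>n\<ge>n0. norm ((\<Sum>k<n. f (real k / real n)) / real n - integral {0..1} f) < e"
    by auto
qed

lemma curve_as_C_apply:
  fixes \<gamma> :: "real \<Rightarrow> 'a::euclidean_space"
  assumes "continuous_on {0..1} \<gamma>"
  shows "apply_bcontfun (curve_as_C \<gamma>) t = \<gamma> (max 0 (min 1 t))"
proof -
  have "continuous_on UNIV (\<lambda>t. \<gamma> (max 0 (min 1 t)))"
    by (rule continuous_on_compose2[OF assms]) (auto intro!: continuous_intros)
  moreover have "bounded (range (\<lambda>t. \<gamma> (max 0 (min 1 t))))"
    by (rule bounded_subset[OF compact_imp_bounded[OF compact_continuous_image[OF assms]]]) auto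
  ultimately show ?thesis
    unfolding curve_as_C_def by (simp add: Bcontfun_inverse bcontfun_def)
qed

lemma borel_measurable_bcontfun_eval[measurable]:
  "(\<lambda>x::'b::topological_space \<Rightarrow>\<^sub>C 'c::metric_space. apply_bcontfun x t) \<in> borel_measurable borel"
  by (rule borel_measurable_continuous_onI)
    (auto simp: continuous_on_iff intro: le_less_trans dist_bounded)

lemma borel_measurable_apply_bcontfun[measurable]:
  "apply_bcontfun (\<phi> :: 'b::metric_space \<Rightarrow>\<^sub>C 'c::metric_space) \<in> borel_measurable borel"
  by (rule borel_measurable_continuous_onI) simp

text \<open>Agrees with curve_current on C^1 curves, and is Borel because it is built from point
  evaluations by sums and limits.\<close>
definition bcontfun_current :: "('a::euclidean_space \<Rightarrow>\<^sub>C 'a) \<Rightarrow> (real \<Rightarrow>\<^sub>C 'a) \<Rightarrow> real" where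
  "bcontfun_current \<phi> x = lim (\<lambda>n. (\<Sum>k<n. lim (\<lambda>m.
     inner (apply_bcontfun \<phi> (apply_bcontfun x (real k / real n)))
       (real m *\<^sub>R (apply_bcontfun x (real k / real n + 1 / real m)
         - apply_bcontfun x (real k / real n))))) / real n)"

lemma borel_measurable_bcontfun_current[measurable]:
  "bcontfun_current \<phi> \<in> borel_measurable borel"
  unfolding bcontfun_current_def by measurable

lemma tendsto_forward_difference_quotient:
  fixes \<gamma> :: "real \<Rightarrow> 'a::euclidean_space"
  assumes der: "(\<gamma> has_vector_derivative D) (at \<sigma>)" and cont: "continuous_on {0..1} \<gamma>"
    and "0 \<le> \<sigma>" "\<sigma> < 1"
  shows "(\<lambda>m. inner v (real m *\<^sub>R (apply_bcontfun (curve_as_C \<gamma>) (\<sigma> + 1 / real m)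
      - apply_bcontfun (curve_as_C \<gamma>) \<sigma>))) \<longlonglongrightarrow> inner v D"
proof -
  have "((\<lambda>t. inner v (\<gamma> t)) has_real_derivative inner v D) (at \<sigma>)"
    unfolding has_real_derivative_iff_has_vector_derivative
    by (rule bounded_linear.has_vector_derivative[OF bounded_linear_inner_right der])
  then have "((\<lambda>h. (inner v (\<gamma> (\<sigma> + h)) - inner v (\<gamma> \<sigma>)) / h) \<longlongrightarrow> inner v D) (at 0)"
    by (rule DERIV_D)
  moreover have "filterlim (\<lambda>m. 1 / real m) (at 0) sequentially"
    using lim_1_over_n by (auto simp: filterlim_at intro: eventually_sequentiallyI[of 1])
  ultimately have "(\<lambda>m. (inner v (\<gamma> (\<sigma> + 1 / real m)) - inner v (\<gamma> \<sigma>)) / (1 / real m)) \<longlonglongrightarrow> inner v D"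
    by (rule filterlim_compose)
  moreover have "\<forall>\<^sub>F m in sequentially. 1 / real m < 1 - \<sigma>"
    using \<open>\<sigma> < 1\<close> by (intro order_tendstoD(2)[OF lim_1_over_n]) simp
  then have "\<forall>\<^sub>F m in sequentially.
      (inner v (\<gamma> (\<sigma> + 1 / real m)) - inner v (\<gamma> \<sigma>)) / (1 / real m)
    = inner v (real m *\<^sub>R (apply_bcontfun (curve_as_C \<gamma>) (\<sigma> + 1 / real m)
        - apply_bcontfun (curve_as_C \<gamma>) \<sigma>))"
    by eventually_elim (use \<open>0 \<le> \<sigma>\<close> \<open>\<sigma> < 1\<close> in \<open>simp add: curve_as_C_apply[OF cont] inner_diff_right\<close>)
  ultimately show ?thesis
    by (rule Lim_transform_eventually)
qed

lemma bcontfun_current_curve_as_C: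
  fixes \<gamma> :: "real \<Rightarrow> 'a::euclidean_space"
  assumes "\<gamma> C1_differentiable_on {0..1}"
  shows "bcontfun_current \<phi> (curve_as_C \<gamma>) = curve_current \<gamma> \<phi>"
proof -
  obtain D where D: "\<And>t. t \<in> {0..1} \<Longrightarrow> (\<gamma> has_vector_derivative D t) (at t)"
    and "continuous_on {0..1} D"
    using assms unfolding C1_differentiable_on_def by blast
  have cont: "continuous_on {0..1} \<gamma>"
    using D by (meson continuous_at_imp_continuous_on has_vector_derivative_continuous)
  define h where "h t = inner (apply_bcontfun \<phi> (\<gamma> t)) (D t)" for t
  have "continuous_on {0..1} h"
    unfolding h_def using \<open>continuous_on {0..1} D\<close>
    by (intro continuous_intros continuous_on_compose2[OF continuous_on_apply_bcontfun cont]) auto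
  have lim_h: "lim (\<lambda>m. inner (apply_bcontfun \<phi> (apply_bcontfun (curve_as_C \<gamma>) s))
      (real m *\<^sub>R (apply_bcontfun (curve_as_C \<gamma>) (s + 1 / real m)
        - apply_bcontfun (curve_as_C \<gamma>) s))) = h s"
    if "0 \<le> s" "s < 1" for s
    using limI[OF tendsto_forward_difference_quotient[OF D cont that]] that
    by (simp add: h_def curve_as_C_apply[OF cont])
  have "bcontfun_current \<phi> (curve_as_C \<gamma>) = lim (\<lambda>n. (\<Sum>k<n. h (real k / real n)) / real n)"
    unfolding bcontfun_current_def
    by (intro arg_cong[where f=lim] ext arg_cong2[where f="(/)"] sum.cong refl lim_h)
      (auto simp: field_simps)
  also have "\<dots> = integral {0..1} h"
    using tendsto_left_riemann_sum[OF \<open>continuous_on {0..1} h\<close>] by (rule limI)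
  also have "\<dots> = curve_current \<gamma> \<phi>"
    unfolding curve_current_def h_def
    by (intro integral_cong arg_cong2[where f=inner] refl vector_derivative_at_within_ivl[symmetric] D)
      auto
  finally show ?thesis .
qed

lemma borel_measurable_curve_current:
  assumes "\<And>\<omega>. \<omega> \<in> space M \<Longrightarrow> \<gamma> \<omega> C1_differentiable_on {0..1}"
    and "(\<lambda>\<omega>. curve_as_C (\<gamma> \<omega>)) \<in> M \<rightarrow>\<^sub>M borel"
  shows "(\<lambda>\<omega>. curve_current (\<gamma> \<omega>) \<phi>) \<in> borel_measurable M"
proof -
  have "(\<lambda>\<omega>. bcontfun_current \<phi> (curve_as_C (\<gamma> \<omega>))) \<in> borel_measurable M"
    using assms(2) by measurable
  then show ?thesis
    by (rule measurable_cong[THEN iffD1, rotated]) (simp add: assms(1) bcontfun_current_curve_as_C)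
qed

lemma symmetric_family_integral_reindex:
  fixes G :: "nat \<Rightarrow> (real \<Rightarrow>\<^sub>C 'a::euclidean_space) \<Rightarrow> real"
  assumes sym: "symmetric_family M N \<gamma>"
    and meas: "\<And>i. i \<in> {1..N} \<Longrightarrow> (\<lambda>\<omega>. curve_as_C (\<gamma> i \<omega>)) \<in> M \<rightarrow>\<^sub>M borel"
    and G: "\<And>k. k \<in> A \<Longrightarrow> G k \<in> borel_measurable borel"
    and A: "A \<subseteq> {1..N}" and j: "inj_on j A" "j ` A \<subseteq> {1..N}"
  shows "(\<integral>\<omega>. (\<Prod>k\<in>A. G k (curve_as_C (\<gamma> (j k) \<omega>))) \<partial>M)
    = (\<integral>\<omega>. (\<Prod>k\<in>A. G k (curve_as_C (\<gamma> k \<omega>))) \<partial>M)"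
proof -
  obtain p where p: "p permutes {1..N}" and pj: "\<And>k. k \<in> A \<Longrightarrow> p k = j k"
    using inj_on_extends_to_permutation[OF A _ j] by blast
  define X where "X q \<omega> = (\<lambda>i\<in>{1..N}. curve_as_C (\<gamma> (q i) \<omega>))" for q \<omega>
  define F where "F x = (\<Prod>k\<in>A. G k (x k))" for x :: "nat \<Rightarrow> real \<Rightarrow>\<^sub>C 'a"
  have X: "X q \<in> M \<rightarrow>\<^sub>M PiM {1..N} (\<lambda>_. borel)" if "q ` {1..N} \<subseteq> {1..N}" for q
    unfolding X_def by (intro measurable_restrict meas) (use that in blast)
  have "F \<in> borel_measurable (PiM {1..N} (\<lambda>_. borel))"
    unfolding F_def
  proof (rule borel_measurable_prod)
    fix k assume "k \<in> A"
    with A show "(\<lambda>x. G k (x k)) \<in> borel_measurable (PiM {1..N} (\<lambda>_. borel))"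
      using measurable_compose[OF measurable_component_singleton[of k "{1..N}" "\<lambda>_. borel"] G[of k]]
      by auto
  qed
  moreover have "distr M (PiM {1..N} (\<lambda>_. borel)) (X p) = distr M (PiM {1..N} (\<lambda>_. borel)) (X id)"
    using sym p unfolding symmetric_family_def X_def by simp
  ultimately have "(\<integral>\<omega>. F (X p \<omega>) \<partial>M) = (\<integral>\<omega>. F (X id \<omega>) \<partial>M)"
    using X[of p] X[of id] permutes_image[OF p] by (simp add: integral_distr[symmetric])
  moreover have "F (X p \<omega>) = (\<Prod>k\<in>A. G k (curve_as_C (\<gamma> (j k) \<omega>)))"
    and "F (X id \<omega>) = (\<Prod>k\<in>A. G k (curve_as_C (\<gamma> k \<omega>)))" for \<omega>
    unfolding F_def X_def using A pj by (auto intro!: prod.cong)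
  ultimately show ?thesis
    by simp
qed

lemma symmetric_family_integral_prod_curve_current:
  assumes "symmetric_family M N \<gamma>"
    and C1: "\<And>i \<omega>. i \<in> {1..N} \<Longrightarrow> \<omega> \<in> space M \<Longrightarrow> \<gamma> i \<omega> C1_differentiable_on {0..1}"
    and "\<And>i. i \<in> {1..N} \<Longrightarrow> (\<lambda>\<omega>. curve_as_C (\<gamma> i \<omega>)) \<in> M \<rightarrow>\<^sub>M borel"
    and A: "A \<subseteq> {1..N}" and j: "inj_on j A" "j ` A \<subseteq> {1..N}"
  shows "(\<integral>\<omega>. (\<Prod>k\<in>A. curve_current (\<gamma> (j k) \<omega>) (\<theta> k)) \<partial>M)
    = (\<integral>\<omega>. (\<Prod>k\<in>A. curve_current (\<gamma> k \<omega>) (\<theta> k)) \<partial>M)"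
proof -
  have "(\<integral>\<omega>. (\<Prod>k\<in>A. curve_current (\<gamma> (j k) \<omega>) (\<theta> k)) \<partial>M)
      = (\<integral>\<omega>. (\<Prod>k\<in>A. bcontfun_current (\<theta> k) (curve_as_C (\<gamma> (j k) \<omega>))) \<partial>M)"
    using A j by (intro Bochner_Integration.integral_cong prod.cong refl)
      (auto simp: bcontfun_current_curve_as_C C1)
  also have "\<dots> = (\<integral>\<omega>. (\<Prod>k\<in>A. bcontfun_current (\<theta> k) (curve_as_C (\<gamma> k \<omega>))) \<partial>M)"
    using assms by (intro symmetric_family_integral_reindex) auto
  also have "\<dots> = (\<integral>\<omega>. (\<Prod>k\<in>A. curve_current (\<gamma> k \<omega>) (\<theta> k)) \<partial>M)"
    using A by (intro Bochner_Integration.integral_cong prod.cong refl)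
      (auto simp: bcontfun_current_curve_as_C C1)
  finally show ?thesis .
qed

theorem theorem6p4:
  fixes M :: "'w measure"
    and \<xi> :: "('a::euclidean_space \<Rightarrow>\<^sub>C 'a) \<Rightarrow> real"
    and \<gamma> :: "nat \<Rightarrow> nat \<Rightarrow> 'w \<Rightarrow> real \<Rightarrow> 'a"
    and r :: nat
    and \<theta> :: "nat \<Rightarrow> ('a \<Rightarrow>\<^sub>C 'a)"
  assumes "prob_space M"
    and "bounded_linear \<xi>"
    and C1: "\<And>N i \<omega>. i \<in> {1..N} \<Longrightarrow> \<omega> \<in> space M \<Longrightarrow> \<gamma> N i \<omega> C1_differentiable_on {0..1}"
    and meas: "\<And>N i. i \<in> {1..N} \<Longrightarrow> (\<lambda>\<omega>. curve_as_C (\<gamma> N i \<omega>)) \<in> M \<rightarrow>\<^sub>M borel"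
    and sym: "\<And>N. symmetric_family M N (\<gamma> N)"
    and bdd: "\<And>\<phi>. \<exists>C. \<forall>N i. i \<in> {1..N} \<longrightarrow>
                (AE \<omega> in M. \<bar>curve_current (\<gamma> N i \<omega>) \<phi>\<bar> \<le> C)"
    and conv: "\<And>\<phi>. (\<lambda>N. integral\<^sup>L M (\<lambda>\<omega>.
                 \<bar>(\<Sum>i\<in>{1..N}. curve_current (\<gamma> N i \<omega>) \<phi>) / real N - \<xi> \<phi>\<bar>))
               \<longlonglongrightarrow> 0"
  shows "(\<lambda>N. integral\<^sup>L M (\<lambda>\<omega>. curve_tensor r (\<lambda>i. \<gamma> N i \<omega>) \<theta>))
           \<longlonglongrightarrow> (\<Prod>i\<in>{1..r}. \<xi> (\<theta> i))"
proof -
  interpret prob_space M by fact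
  have "\<forall>\<phi>. \<exists>C. \<forall>N i. i \<in> {1..N} \<longrightarrow> (AE \<omega> in M. \<bar>curve_current (\<gamma> N i \<omega>) \<phi>\<bar> \<le> C)"
    using bdd by blast
  then obtain C where C: "\<And>\<phi> N i. i \<in> {1..N} \<Longrightarrow> AE \<omega> in M. \<bar>curve_current (\<gamma> N i \<omega>) \<phi>\<bar> \<le> C \<phi>"
    by metis
  show ?thesis
    unfolding curve_tensor_def
  proof (rule tendsto_integral_prod_exchangeable[where X = "\<lambda>N i k \<omega>. curve_current (\<gamma> N i \<omega>) (\<theta> k)"
        and C = "\<lambda>k. C (\<theta> k)" and c = "\<lambda>k. \<xi> (\<theta> k)"])
    show "(\<lambda>\<omega>. curve_current (\<gamma> N i \<omega>) (\<theta> k)) \<in> borel_measurable M"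
      if "i \<in> {1..N}" "k \<in> {1..r}" for N i k
      using that by (intro borel_measurable_curve_current C1 meas)
    show "(\<integral>\<omega>. (\<Prod>k\<in>{1..r}. curve_current (\<gamma> N (j k) \<omega>) (\<theta> k)) \<partial>M)
        = (\<integral>\<omega>. (\<Prod>k\<in>{1..r}. curve_current (\<gamma> N k \<omega>) (\<theta> k)) \<partial>M)"
      if "r \<le> N" "j \<in> {1..r} \<rightarrow>\<^sub>E {1..N}" "inj_on j {1..r}" for N j
      using that by (intro symmetric_family_integral_prod_curve_current[OF sym] C1 meas) auto
  qed (use C conv in auto)
qed

end
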